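(* For every $n\ge1$, no proper subset of $F_n$ that contains both $a_1$ and $a_{5n+3}$ is full. Consequently (since $F_n$ is full) the geodesic between $a_1$ and $a_{5n+3}$ in $F_n$, i.e. the smallest full subset of $F_n$ containing both points, is all of $F_n$, which has $5n+4$ points.
   Context: Let $X_1,X_2,X_3$ be pairwise disjoint nonempty sets and $\Omega=X_1\times X_2\times X_3$, with projections $\Pi_i:\Omega\to X_i$. A set $S\subset\Omega$ is good if every function $f:S\to\mathbb C$ can be written $f(w_1,w_2,w_3)=u_1(w_1)+u_2(w_2)+u_3(w_3)$ for all $(w_1,w_2,w_3)\in S$, for some functions $u_i:X_i\to\mathbb C$. A set $S$ is full if it is a maximal good subset of $\Pi_1S\times\Pi_2S\times\Pi_3S$. Construction: fix pairwise distinct elements $x_1,y_1,\alpha_{5k-4},\alpha_{5k-1}$ ($k\ge1$) of $X_1$; pairwise distinct elements $x_2,y_2,\alpha_{5k-3},\alpha_{5k}$ ($k\ge1$) of $X_2$; pairwise distinct elements $x_3,z_3,\alpha_{5k-2}$ ($k\ge1$) of $X_3$. Set the convention $\alpha_{-3}:=y_2$, $\alpha_{-2}:=z_3$. Define $a_1=(x_1,x_2,x_3)$, $a_2=(y_1,y_2,x_3)$, $a_3=(y_1,x_2,z_3)$ and for $n\ge1$: $a_{5n-1}=(\alpha_{5n-4},\alpha_{5n-3},\alpha_{5n-2})$, $a_{5n}=(\alpha_{5n-1},\alpha_{5n},\alpha_{5n-2})$, $a_{5n+1}=(\alpha_{5n-4},\alpha_{5n},\alpha_{5n-7})$, $a_{5n+2}=(\alpha_{5n-1},\alpha_{5n-3},x_3)$,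 $a_{5n+3}=(x_1,\alpha_{5n-8},\alpha_{5n-2})$. Let $D_n=\{a_1,\dots,a_{5n+3}\}$, $b_n=(\alpha_{5n-1},y_2,z_3)$ and $F_n=D_n\cup\{b_n\}$. *)

theory Defs
  imports Complex_Main
begin

text \<open>The three disjoint sets X1, X2, X3 are modelled as three (arbitrary) types
  'a, 'b, 'c; Omega = 'a \<times> 'b \<times> 'c, with projections fst, fst o snd, snd o snd.\<close>

definition good :: "('a \<times> 'b \<times> 'c) set \<Rightarrow> bool" where
  "good S \<longleftrightarrow> (\<forall>f :: 'a \<times> 'b \<times> 'c \<Rightarrow> complex.
      \<exists>(u1 :: 'a \<Rightarrow> complex) (u2 :: 'b \<Rightarrow> complex) (u3 :: 'c \<Rightarrow> complex).
        \<forall>w1 w2 w3. (w1, w2, w3) \<in> S \<longrightarrow> f (w1, w2, w3) = u1 w1 + u2 w2 + u3 w3)"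

definition proj1 :: "('a \<times> 'b \<times> 'c) set \<Rightarrow> 'a set" where
  "proj1 S = (\<lambda>w. fst w) ` S"
definition proj2 :: "('a \<times> 'b \<times> 'c) set \<Rightarrow> 'b set" where
  "proj2 S = (\<lambda>w. fst (snd w)) ` S"
definition proj3 :: "('a \<times> 'b \<times> 'c) set \<Rightarrow> 'c set" where
  "proj3 S = (\<lambda>w. snd (snd w)) ` S"

definition full :: "('a \<times> 'b \<times> 'c) set \<Rightarrow> bool" where
  "full S \<longleftrightarrow> good S \<and>
     (\<forall>T. S \<subset> T \<and> T \<subseteq> proj1 S \<times> proj2 S \<times> proj3 S \<longrightarrow> \<not> good T)"

text \<open>Index sets of the alpha's (integer indices): alpha_{5k-4}, alpha_{5k-1} in X1,
  alpha_{5k-3}, alpha_{5k} in X2, alpha_{5k-2} in X3, for k \<ge> 1.\<close>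
definition I1 :: "int set" where "I1 = {i. \<exists>k\<ge>1. i = 5*k - 4 \<or> i = 5*k - 1}"
definition I2 :: "int set" where "I2 = {i. \<exists>k\<ge>1. i = 5*k - 3 \<or> i = 5*k}"
definition I3 :: "int set" where "I3 = {i. \<exists>k\<ge>1. i = 5*k - 2}"

text \<open>Convention alpha_{-3} := y2, alpha_{-2} := z3.\<close>
definition A2 :: "'b \<Rightarrow> (int \<Rightarrow> 'b) \<Rightarrow> int \<Rightarrow> 'b" where
  "A2 y2 \<alpha>2 i = (if i = -3 then y2 else \<alpha>2 i)"
definition A3 :: "'c \<Rightarrow> (int \<Rightarrow> 'c) \<Rightarrow> int \<Rightarrow> 'c" where
  "A3 z3 \<alpha>3 i = (if i = -2 then z3 else \<alpha>3 i)"

text \<open>The points a_m (m \<ge> 1).  For m \<ge> 4 the residue of m mod 5 determines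
  which of a_{5n-1}, a_{5n}, a_{5n+1}, a_{5n+2}, a_{5n+3} (n \<ge> 1) m is.\<close>
definition apt :: "'a \<Rightarrow> 'a \<Rightarrow> 'b \<Rightarrow> 'b \<Rightarrow> 'c \<Rightarrow> 'c \<Rightarrow>
    (int \<Rightarrow> 'a) \<Rightarrow> (int \<Rightarrow> 'b) \<Rightarrow> (int \<Rightarrow> 'c) \<Rightarrow> nat \<Rightarrow> 'a \<times> 'b \<times> 'c" where
  "apt x1 y1 x2 y2 x3 z3 \<alpha>1 \<alpha>2 \<alpha>3 m =
    (let k = int m; B2 = A2 y2 \<alpha>2; B3 = A3 z3 \<alpha>3 in
     if m = 1 then (x1, x2, x3)
     else if m = 2 then (y1, y2, x3)
     else if m = 3 then (y1, x2, z3)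
     else if m mod 5 = 4 then (let n = (k + 1) div 5 in
       (\<alpha>1 (5*n - 4), B2 (5*n - 3), B3 (5*n - 2)))
     else if m mod 5 = 0 then (let n = k div 5 in
       (\<alpha>1 (5*n - 1), B2 (5*n), B3 (5*n - 2)))
     else if m mod 5 = 1 then (let n = (k - 1) div 5 in
       (\<alpha>1 (5*n - 4), B2 (5*n), B3 (5*n - 7)))
     else if m mod 5 = 2 then (let n = (k - 2) div 5 in
       (\<alpha>1 (5*n - 1), B2 (5*n - 3), x3))
     else (let n = (k - 3) div 5 in
       (x1, B2 (5*n - 8), B3 (5*n - 2))))"

definition Dset :: "'a \<Rightarrow> 'a \<Rightarrow> 'b \<Rightarrow> 'b \<Rightarrow> 'c \<Rightarrow> 'c \<Rightarrow>
    (int \<Rightarrow> 'a) \<Rightarrow> (int \<Rightarrow> 'b) \<Rightarrow> (int \<Rightarrow> 'c) \<Rightarrow> nat \<Rightarrow> ('a \<times> 'b \<times> 'c) set" where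
  "Dset x1 y1 x2 y2 x3 z3 \<alpha>1 \<alpha>2 \<alpha>3 n =
     apt x1 y1 x2 y2 x3 z3 \<alpha>1 \<alpha>2 \<alpha>3 ` {1 .. 5*n + 3}"

definition bpt :: "'b \<Rightarrow> 'c \<Rightarrow> (int \<Rightarrow> 'a) \<Rightarrow> nat \<Rightarrow> 'a \<times> 'b \<times> 'c" where
  "bpt y2 z3 \<alpha>1 n = (\<alpha>1 (5 * int n - 1), y2, z3)"

definition Fset :: "'a \<Rightarrow> 'a \<Rightarrow> 'b \<Rightarrow> 'b \<Rightarrow> 'c \<Rightarrow> 'c \<Rightarrow>
    (int \<Rightarrow> 'a) \<Rightarrow> (int \<Rightarrow> 'b) \<Rightarrow> (int \<Rightarrow> 'c) \<Rightarrow> nat \<Rightarrow> ('a \<times> 'b \<times> 'c) set" where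
  "Fset x1 y1 x2 y2 x3 z3 \<alpha>1 \<alpha>2 \<alpha>3 n =
     insert (bpt y2 z3 \<alpha>1 n) (Dset x1 y1 x2 y2 x3 z3 \<alpha>1 \<alpha>2 \<alpha>3 n)"

end

theory Submission
  imports Defs
begin

(* Call a triple of functions (phi1, phi2, phi3) on X1, X2, X3 a potential; it vanishes at
   w = (w1, w2, w3) if phi1 w1 + phi2 w2 + phi3 w3 = 0.
   1. A rank bound for full sets: a finite full set S satisfies
        |Pi1 S| + |Pi2 S| + |Pi3 S| <= |S| + 2.
      Otherwise a homogeneous linear system with more unknowns than equations yields a
      potential vanishing on S but not at some point t of the box Pi1 S x Pi2 S x Pi3 S, and
      then S with t added is still good, contradicting maximality.
   2. An encoding of F_n: its points are indexed by pairs (k, t) (block 0 is b_n, a_1, a_2, a_3,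
      block k >= 1 is a_(5k-1), ..., a_(5k+3)), and each coordinate value by an abstract label.
      The distinctness hypotheses make the labels faithful, so |Pi_i S| is the number of
      i-th labels used by the indices of S.
   3. A counting lemma: indices that contain those of a_1 and a_(5n+3) but miss some other
      index use at least 3 more labels than there are indices.  This comes from an explicit
      injective choice of one label per index, avoiding the five labels of the two ends. *)

lemma homogeneous_system_nontrivial_solution:
  fixes a :: "'e \<Rightarrow> 'x \<Rightarrow> 'f::field"
  assumes "finite E" "finite X" "card E < card X"
  shows "\<exists>\<phi>. (\<forall>e\<in>E. (\<Sum>x\<in>X. a e x * \<phi> x) = 0) \<and> (\<exists>x\<in>X. \<phi> x \<noteq> 0)"
  using assms
proof (induction E arbitrary: X a rule: finite_induct)
  case empty
  then obtain x0 where "x0 \<in> X" by (metis card.empty card_gt_0_iff equals0I)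
  then show ?case by (intro exI[of _ "\<lambda>x. if x = x0 then 1 else 0"]) auto
next
  case (insert e E)
  show ?case
  proof (cases "\<forall>x\<in>X. a e x = 0")
    case True
    then show ?thesis using insert by fastforce
  next
    case False
    then obtain x0 where x0: "x0 \<in> X" "a e x0 \<noteq> 0" by auto
    define X' where "X' = X - {x0}"
    have "finite X'" "card E < card X'" using insert x0 by (auto simp: X'_def)
    \<comment> \<open>eliminate the unknown \<open>x0\<close> from the remaining equations by means of equation \<open>e\<close>\<close>
    define a' where "a' = (\<lambda>e' x. a e' x - a e' x0 * a e x / a e x0)"
    obtain \<psi> where \<psi>: "\<forall>e'\<in>E. (\<Sum>x\<in>X'. a' e' x * \<psi> x) = 0" "\<exists>x\<in>X'. \<psi> x \<noteq> 0"
      using insert.IH[OF \<open>finite X'\<close> \<open>card E < card X'\<close>] by blast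
    define s where "s = (\<Sum>y\<in>X'. a e y * \<psi> y)"
    define \<phi> where "\<phi> = (\<lambda>x. if x = x0 then - s / a e x0 else \<psi> x)"
    have split: "(\<Sum>x\<in>X. b x * \<phi> x) = b x0 * (- s / a e x0) + (\<Sum>x\<in>X'. b x * \<psi> x)" for b
    proof -
      have "(\<Sum>x\<in>X. b x * \<phi> x) = b x0 * \<phi> x0 + (\<Sum>x\<in>X'. b x * \<phi> x)"
        using sum.remove[OF insert.prems(1) x0(1)] X'_def by simp
      also have "(\<Sum>x\<in>X'. b x * \<phi> x) = (\<Sum>x\<in>X'. b x * \<psi> x)"
        by (rule sum.cong) (auto simp: \<phi>_def X'_def)
      finally show ?thesis by (simp add: \<phi>_def)
    qed
    have "(\<Sum>x\<in>X. a e x * \<phi> x) = 0" using split[of "a e"] x0 by (simp add: s_def)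
    moreover have "(\<Sum>x\<in>X. a e' x * \<phi> x) = 0" if "e' \<in> E" for e'
    proof -
      have "0 = (\<Sum>x\<in>X'. a' e' x * \<psi> x)" using \<psi>(1) that by auto
      also have "\<dots> = (\<Sum>x\<in>X'. a e' x * \<psi> x - a e' x0 / a e x0 * (a e x * \<psi> x))"
        by (rule sum.cong) (auto simp: a'_def field_simps)
      also have "\<dots> = (\<Sum>x\<in>X'. a e' x * \<psi> x) - a e' x0 / a e x0 * s"
        by (simp add: s_def sum_subtractf sum_distrib_left)
      finally have "(\<Sum>x\<in>X'. a e' x * \<psi> x) = a e' x0 / a e x0 * s" by simp
      then show ?thesis using split[of "a e'"] by simp
    qed
    moreover have "\<exists>x\<in>X. \<phi> x \<noteq> 0" using \<psi>(2) X'_def \<phi>_def by auto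
    ultimately show ?thesis by (intro exI[of _ \<phi>]) auto
  qed
qed

(* If a potential vanishes on a good set S but not at t, then S with t added is good:
   correct the representation of f on S by a multiple of the potential to fit f at t. *)
lemma good_insert:
  assumes "good S"
    and vanish: "\<And>w1 w2 w3. (w1, w2, w3) \<in> S \<Longrightarrow> \<phi>1 w1 + \<phi>2 w2 + \<phi>3 w3 = (0::complex)"
    and nonzero: "\<phi>1 t1 + \<phi>2 t2 + \<phi>3 t3 \<noteq> 0"
  shows "good (insert (t1, t2, t3) S)"
  unfolding good_def
proof
  fix f :: "'a \<times> 'b \<times> 'c \<Rightarrow> complex"
  obtain u1 u2 u3 where u: "\<And>w1 w2 w3. (w1, w2, w3) \<in> S \<Longrightarrow> f (w1, w2, w3) = u1 w1 + u2 w2 + u3 w3"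
    using \<open>good S\<close> unfolding good_def by (elim allE[of _ f]) blast
  define l where "l = (f (t1, t2, t3) - (u1 t1 + u2 t2 + u3 t3)) / (\<phi>1 t1 + \<phi>2 t2 + \<phi>3 t3)"
  have "f (w1, w2, w3) = (u1 w1 + l * \<phi>1 w1) + (u2 w2 + l * \<phi>2 w2) + (u3 w3 + l * \<phi>3 w3)"
    if "(w1, w2, w3) \<in> insert (t1, t2, t3) S" for w1 w2 w3
  proof (cases "(w1, w2, w3) \<in> S")
    case True
    then have "l * (\<phi>1 w1 + \<phi>2 w2 + \<phi>3 w3) = 0" using vanish by simp
    then show ?thesis using u[OF True] by (simp add: algebra_simps)
  next
    case False
    then have w: "(w1, w2, w3) = (t1, t2, t3)" using that by blast
    have "l * (\<phi>1 t1 + \<phi>2 t2 + \<phi>3 t3) = f (t1, t2, t3) - (u1 t1 + u2 t2 + u3 t3)"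
      using nonzero unfolding l_def by simp
    then show ?thesis using w by (simp add: algebra_simps)
  qed
  then show "\<exists>u1 u2 u3. \<forall>w1 w2 w3. (w1, w2, w3) \<in> insert (t1, t2, t3) S \<longrightarrow>
      f (w1, w2, w3) = u1 w1 + u2 w2 + u3 w3"
    by (intro exI[of _ "\<lambda>x. u1 x + l * \<phi>1 x"] exI[of _ "\<lambda>x. u2 x + l * \<phi>2 x"]
        exI[of _ "\<lambda>x. u3 x + l * \<phi>3 x"]) blast
qed

(* The unknowns are the values of the potential on the
   disjoint union of the projections minus two normalised ones; there is one equation per
   point of S. *)
lemma nonzero_potential_vanishing_on:
  fixes S :: "('a \<times> 'b \<times> 'c) set"
  assumes fin: "finite S" and v: "(v1, v2, v3) \<in> S"
    and big: "card S + 2 < card (proj1 S) + card (proj2 S) + card (proj3 S)"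
  obtains \<phi>1 :: "'a \<Rightarrow> complex" and \<phi>2 :: "'b \<Rightarrow> complex" and \<phi>3 :: "'c \<Rightarrow> complex"
  where "\<And>w1 w2 w3. (w1, w2, w3) \<in> S \<Longrightarrow> \<phi>1 w1 + \<phi>2 w2 + \<phi>3 w3 = 0"
    and "\<phi>1 v1 = 0" and "\<phi>2 v2 = 0"
    and "(\<exists>a\<in>proj1 S. \<phi>1 a \<noteq> 0) \<or> (\<exists>b\<in>proj2 S. \<phi>2 b \<noteq> 0) \<or> (\<exists>c\<in>proj3 S. \<phi>3 c \<noteq> 0)"
proof -
  have fin_proj: "finite (proj1 S)" "finite (proj2 S)" "finite (proj3 S)"
    using fin unfolding proj1_def proj2_def proj3_def by auto
  have v_proj: "v1 \<in> proj1 S" "v2 \<in> proj2 S"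
    using v unfolding proj1_def proj2_def by force+
  define V :: "('a + 'b + 'c) set" where
    "V = Inl ` proj1 S \<union> Inr ` (Inl ` proj2 S \<union> Inr ` proj3 S)"
  have "card (Inl ` proj2 S \<union> Inr ` proj3 S :: ('b + 'c) set) = card (proj2 S) + card (proj3 S)"
    using fin_proj by (subst card_Un_disjoint) (auto simp: card_image)
  then have "card V = card (proj1 S) + card (proj2 S) + card (proj3 S)"
    unfolding V_def using fin_proj by (subst card_Un_disjoint) (auto simp: card_image)
  define X where "X = V - {Inl v1, Inr (Inl v2)}"
  have fin_X: "finite X" using fin_proj by (simp add: X_def V_def)
  have "card X = card V - 2"
    using v_proj fin_proj unfolding X_def by (subst card_Diff_subset) (auto simp: V_def)
  with big \<open>card V = _\<close> have "card S < card X" by simp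
  define inc :: "'a \<times> 'b \<times> 'c \<Rightarrow> 'a + 'b + 'c \<Rightarrow> complex" where
    "inc w x = (case x of Inl a \<Rightarrow> if fst w = a then 1 else 0
       | Inr (Inl b) \<Rightarrow> if fst (snd w) = b then 1 else 0
       | Inr (Inr c) \<Rightarrow> if snd (snd w) = c then 1 else 0)" for w x
  obtain \<phi> where \<phi>: "\<forall>w\<in>S. (\<Sum>x\<in>X. inc w x * \<phi> x) = 0" "\<exists>x\<in>X. \<phi> x \<noteq> 0"
    using homogeneous_system_nontrivial_solution[OF fin fin_X \<open>card S < card X\<close>, of inc] by blast
  define \<phi>' where "\<phi>' x = (if x \<in> X then \<phi> x else 0)" for x
  define \<phi>1 where "\<phi>1 a = \<phi>' (Inl a)" for a
  define \<phi>2 where "\<phi>2 b = \<phi>' (Inr (Inl b))" for b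
  define \<phi>3 where "\<phi>3 c = \<phi>' (Inr (Inr c))" for c
  have "\<phi>1 w1 + \<phi>2 w2 + \<phi>3 w3 = 0" if w: "(w1, w2, w3) \<in> S" for w1 w2 w3
  proof -
    define T :: "('a + 'b + 'c) set" where "T = {Inl w1, Inr (Inl w2), Inr (Inr w3)}"
    have "0 = (\<Sum>x\<in>X. inc (w1, w2, w3) x * \<phi>' x)"
      using \<phi>(1) w by (auto simp: \<phi>'_def)
    also have "\<dots> = (\<Sum>x\<in>X \<union> T. inc (w1, w2, w3) x * \<phi>' x)"
      by (rule sum.mono_neutral_right[symmetric]) (auto simp: fin_X T_def \<phi>'_def)
    also have "\<dots> = (\<Sum>x\<in>T. inc (w1, w2, w3) x * \<phi>' x)"
      by (rule sum.mono_neutral_right)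
        (auto simp: fin_X T_def inc_def split: sum.splits)
    also have "\<dots> = \<phi>1 w1 + \<phi>2 w2 + \<phi>3 w3"
      by (simp add: T_def inc_def \<phi>1_def \<phi>2_def \<phi>3_def)
    finally show ?thesis by simp
  qed
  moreover have "\<phi>1 v1 = 0" "\<phi>2 v2 = 0" by (auto simp: \<phi>1_def \<phi>2_def \<phi>'_def X_def)
  moreover obtain x0 where "x0 \<in> X" "\<phi> x0 \<noteq> 0" using \<phi>(2) by blast
  then have "(\<exists>a\<in>proj1 S. \<phi>1 a \<noteq> 0) \<or> (\<exists>b\<in>proj2 S. \<phi>2 b \<noteq> 0) \<or> (\<exists>c\<in>proj3 S. \<phi>3 c \<noteq> 0)"
    by (auto simp: X_def V_def \<phi>1_def \<phi>2_def \<phi>3_def \<phi>'_def)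
  ultimately show ?thesis using that by blast
qed

lemma full_projection_bound:
  fixes S :: "('a \<times> 'b \<times> 'c) set"
  assumes full: "full S" and fin: "finite S"
  shows "card (proj1 S) + card (proj2 S) + card (proj3 S) \<le> card S + 2"
proof (rule ccontr)
  assume "\<not> ?thesis"
  then have big: "card S + 2 < card (proj1 S) + card (proj2 S) + card (proj3 S)" by simp
  then have "S \<noteq> {}" unfolding proj1_def proj2_def proj3_def by auto
  then obtain v1 v2 v3 where v: "(v1, v2, v3) \<in> S" by (metis ex_in_conv prod_cases3)
  obtain \<phi>1 \<phi>2 \<phi>3
    where vanish: "\<And>w1 w2 w3. (w1, w2, w3) \<in> S \<Longrightarrow> \<phi>1 w1 + \<phi>2 w2 + \<phi>3 w3 = (0::complex)"
    and norm: "\<phi>1 v1 = 0" "\<phi>2 v2 = 0"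
    and nz: "(\<exists>a\<in>proj1 S. \<phi>1 a \<noteq> 0) \<or> (\<exists>b\<in>proj2 S. \<phi>2 b \<noteq> 0) \<or> (\<exists>c\<in>proj3 S. \<phi>3 c \<noteq> 0)"
    using nonzero_potential_vanishing_on[OF fin v big] by blast
  have "\<phi>3 v3 = 0" using vanish[OF v] norm by simp
  have v_proj: "v1 \<in> proj1 S" "v2 \<in> proj2 S" "v3 \<in> proj3 S"
    using v unfolding proj1_def proj2_def proj3_def by force+
  \<comment> \<open>changing one coordinate of \<open>v\<close> gives a point of the box where the potential is nonzero\<close>
  obtain t1 t2 t3 where t: "t1 \<in> proj1 S" "t2 \<in> proj2 S" "t3 \<in> proj3 S"
    and t_nz: "\<phi>1 t1 + \<phi>2 t2 + \<phi>3 t3 \<noteq> 0"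
    using nz v_proj norm \<open>\<phi>3 v3 = 0\<close> by (elim disjE bexE) force+
  have "good S" using full unfolding full_def by blast
  then have "good (insert (t1, t2, t3) S)" using vanish t_nz by (rule good_insert)
  moreover have "S \<subset> insert (t1, t2, t3) S" using vanish t_nz by blast
  moreover have "insert (t1, t2, t3) S \<subseteq> proj1 S \<times> proj2 S \<times> proj3 S"
    using t unfolding proj1_def proj2_def proj3_def by force
  ultimately show False using full unfolding full_def by blast
qed

(* Indices of the points of F_n: block 0 consists of b_n, a_1, a_2, a_3 (t = 0, 1, 2, 3),
   block k, for 1 <= k <= n, consists of a_(5k-1+t) for t = 0, ..., 4. *)
definition Idx :: "nat \<Rightarrow> (nat \<times> nat) set" where
  "Idx n = {(0, t) | t. t < 4} \<union> {(k, t). 1 \<le> k \<and> k \<le> n \<and> t < 5}"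

lemma finite_Idx: "finite (Idx n)"
  by (rule finite_subset[of _ "{0..n} \<times> {0..<5}"]) (auto simp: Idx_def)

lemma card_Idx: "card (Idx n) = 5 * n + 4"
proof -
  have "Idx n = ({0} \<times> {0..<4}) \<union> ({1..n} \<times> {0..<5})" unfolding Idx_def by auto
  moreover have "card (({0::nat} \<times> {0..<4::nat}) \<union> ({1..n} \<times> {0..<5})) = 4 + n * 5"
    by (subst card_Un_disjoint) (auto simp: card_cartesian_product)
  ultimately show ?thesis by simp
qed

(* Coordinate values are named by labels in nat x nat.  First coordinate: (0,5) is x1,
   (0,0) is y1, (k,0) is alpha_(5k-4) and (k,1) is alpha_(5k-1).  Second coordinate: (0,6) is
   x2, (0,2) is y2, (k,2) is alpha_(5k-3) and (k,3) is alpha_(5k).  Third coordinate: (0,7) is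
   x3, (0,4) is z3 and (k,4) is alpha_(5k-2). *)
definition Lab1 :: "(nat \<times> nat) set" where
  "Lab1 = {(0, 0), (0, 5)} \<union> {l. fst l \<ge> 1 \<and> snd l \<le> 1}"
definition Lab2 :: "(nat \<times> nat) set" where
  "Lab2 = {(0, 2), (0, 6)} \<union> {l. fst l \<ge> 1 \<and> (snd l = 2 \<or> snd l = 3)}"
definition Lab3 :: "(nat \<times> nat) set" where
  "Lab3 = {(0, 4), (0, 7)} \<union> {l. fst l \<ge> 1 \<and> snd l = 4}"

lemma Lab_disjoint: "Lab1 \<inter> Lab2 = {}" "(Lab1 \<union> Lab2) \<inter> Lab3 = {}"
  unfolding Lab1_def Lab2_def Lab3_def by auto

definition val1 :: "'a \<Rightarrow> 'a \<Rightarrow> (int \<Rightarrow> 'a) \<Rightarrow> nat \<times> nat \<Rightarrow> 'a" where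
  "val1 x1 y1 \<alpha>1 l = (if fst l = 0 then (if snd l = 5 then x1 else y1)
     else if snd l = 0 then \<alpha>1 (5 * int (fst l) - 4) else \<alpha>1 (5 * int (fst l) - 1))"
definition val2 :: "'b \<Rightarrow> 'b \<Rightarrow> (int \<Rightarrow> 'b) \<Rightarrow> nat \<times> nat \<Rightarrow> 'b" where
  "val2 x2 y2 \<alpha>2 l = (if fst l = 0 then (if snd l = 6 then x2 else y2)
     else if snd l = 2 then \<alpha>2 (5 * int (fst l) - 3) else \<alpha>2 (5 * int (fst l)))"
definition val3 :: "'c \<Rightarrow> 'c \<Rightarrow> (int \<Rightarrow> 'c) \<Rightarrow> nat \<times> nat \<Rightarrow> 'c" where
  "val3 x3 z3 \<alpha>3 l = (if fst l = 0 then (if snd l = 7 then x3 else z3)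
     else \<alpha>3 (5 * int (fst l) - 2))"

lemma inj_val1:
  assumes "x1 \<noteq> y1" "inj_on \<alpha>1 I1" "x1 \<notin> \<alpha>1 ` I1" "y1 \<notin> \<alpha>1 ` I1"
  shows "inj_on (val1 x1 y1 \<alpha>1) Lab1"
proof (rule inj_onI)
  fix u v assume uv: "u \<in> Lab1" "v \<in> Lab1" "val1 x1 y1 \<alpha>1 u = val1 x1 y1 \<alpha>1 v"
  have I: "5 * int a - 4 \<in> I1" "5 * int a - 1 \<in> I1" if "a \<ge> 1" for a
    using that unfolding I1_def by (auto intro!: exI[of _ "int a"])
  obtain a s b t where [simp]: "u = (a, s)" "v = (b, t)" by fastforce
  have "5 * int a - 4 \<noteq> 5 * int b - 1" "5 * int b - 4 \<noteq> 5 * int a - 1" by presburger+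
  then show "u = v" using uv assms I unfolding Lab1_def val1_def
    by (auto split: if_splits dest: inj_onD[OF assms(2)])
qed

lemma inj_val2:
  assumes "x2 \<noteq> y2" "inj_on \<alpha>2 I2" "x2 \<notin> \<alpha>2 ` I2" "y2 \<notin> \<alpha>2 ` I2"
  shows "inj_on (val2 x2 y2 \<alpha>2) Lab2"
proof (rule inj_onI)
  fix u v assume uv: "u \<in> Lab2" "v \<in> Lab2" "val2 x2 y2 \<alpha>2 u = val2 x2 y2 \<alpha>2 v"
  have I: "5 * int a - 3 \<in> I2" "5 * int a \<in> I2" if "a \<ge> 1" for a
    using that unfolding I2_def by (auto intro!: exI[of _ "int a"])
  obtain a s b t where [simp]: "u = (a, s)" "v = (b, t)" by fastforce
  have "5 * int a - 3 \<noteq> 5 * int b" "5 * int b - 3 \<noteq> 5 * int a" by presburger+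
  then show "u = v" using uv assms I unfolding Lab2_def val2_def
    by (auto split: if_splits dest: inj_onD[OF assms(2)])
qed

lemma inj_val3:
  assumes "x3 \<noteq> z3" "inj_on \<alpha>3 I3" "x3 \<notin> \<alpha>3 ` I3" "z3 \<notin> \<alpha>3 ` I3"
  shows "inj_on (val3 x3 z3 \<alpha>3) Lab3"
proof (rule inj_onI)
  fix u v assume "u \<in> Lab3" "v \<in> Lab3" "val3 x3 z3 \<alpha>3 u = val3 x3 z3 \<alpha>3 v"
  moreover have "5 * int a - 2 \<in> I3" if "a \<ge> 1" for a
    using that unfolding I3_def by (auto intro!: exI[of _ "int a"])
  ultimately show "u = v" using assms unfolding Lab3_def val3_def
    by (cases u; cases v) (auto split: if_splits dest: inj_onD[OF assms(2)])
qed

definition labels :: "nat \<Rightarrow> nat \<times> nat \<Rightarrow> (nat \<times> nat) \<times> (nat \<times> nat) \<times> (nat \<times> nat)" where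
  "labels n p = (let k = fst p; t = snd p in
     if k = 0 then
       (if t = 0 then ((n, 1), (0, 2), (0, 4))
        else if t = 1 then ((0, 5), (0, 6), (0, 7))
        else if t = 2 then ((0, 0), (0, 2), (0, 7))
        else ((0, 0), (0, 6), (0, 4)))
     else if t = 0 then ((k, 0), (k, 2), (k, 4))
     else if t = 1 then ((k, 1), (k, 3), (k, 4))
     else if t = 2 then ((k, 0), (k, 3), (k - 1, 4))
     else if t = 3 then ((k, 1), (k, 2), (0, 7))
     else ((0, 5), (k - 1, 2), (k, 4)))"

definition lab1 :: "nat \<Rightarrow> nat \<times> nat \<Rightarrow> nat \<times> nat" where "lab1 n p = fst (labels n p)"
definition lab2 :: "nat \<Rightarrow> nat \<times> nat \<Rightarrow> nat \<times> nat" where "lab2 n p = fst (snd (labels n p))"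
definition lab3 :: "nat \<Rightarrow> nat \<times> nat \<Rightarrow> nat \<times> nat" where "lab3 n p = snd (snd (labels n p))"

lemmas lab_defs = lab1_def lab2_def lab3_def labels_def

lemma labels_in_Lab:
  assumes "p \<in> Idx n" "n \<ge> 1"
  shows "lab1 n p \<in> Lab1" "lab2 n p \<in> Lab2" "lab3 n p \<in> Lab3"
  using assms unfolding Idx_def Lab1_def Lab2_def Lab3_def lab_defs Let_def by auto

lemma decode_first_labels:
  assumes "p \<in> Idx n"
  shows "(let l1 = lab1 n p; l2 = lab2 n p in
      if l1 = (0, 5) then (if l2 = (0, 6) then (0, 1) else (fst l2 + 1, 4))
      else if l1 = (0, 0) then (if l2 = (0, 2) then (0, 2) else (0, 3))
      else if snd l1 = 0 then (fst l1, if snd l2 = 2 then 0 else 2)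
      else if fst l2 = 0 then (0, 0)
      else (fst l1, if snd l2 = 3 then 1 else 3)) = p"
  using assms unfolding Idx_def lab_defs Let_def by auto

lemma inj_on_first_labels: "inj_on (\<lambda>p. (lab1 n p, lab2 n p)) (Idx n)"
  by (rule inj_onI) (metis decode_first_labels prod.inject)

definition pt :: "'a \<Rightarrow> 'a \<Rightarrow> 'b \<Rightarrow> 'b \<Rightarrow> 'c \<Rightarrow> 'c \<Rightarrow>
    (int \<Rightarrow> 'a) \<Rightarrow> (int \<Rightarrow> 'b) \<Rightarrow> (int \<Rightarrow> 'c) \<Rightarrow> nat \<Rightarrow> nat \<times> nat \<Rightarrow> 'a \<times> 'b \<times> 'c" where
  "pt x1 y1 x2 y2 x3 z3 \<alpha>1 \<alpha>2 \<alpha>3 n p =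
     (val1 x1 y1 \<alpha>1 (lab1 n p), val2 x2 y2 \<alpha>2 (lab2 n p), val3 x3 z3 \<alpha>3 (lab3 n p))"

lemma inj_pt:
  assumes "x1 \<noteq> y1" "inj_on \<alpha>1 I1" "x1 \<notin> \<alpha>1 ` I1" "y1 \<notin> \<alpha>1 ` I1"
    and "x2 \<noteq> y2" "inj_on \<alpha>2 I2" "x2 \<notin> \<alpha>2 ` I2" "y2 \<notin> \<alpha>2 ` I2"
    and "n \<ge> 1"
  shows "inj_on (pt x1 y1 x2 y2 x3 z3 \<alpha>1 \<alpha>2 \<alpha>3 n) (Idx n)"
proof (rule inj_onI)
  fix p p' assume p: "p \<in> Idx n" and p': "p' \<in> Idx n"
    and "pt x1 y1 x2 y2 x3 z3 \<alpha>1 \<alpha>2 \<alpha>3 n p = pt x1 y1 x2 y2 x3 z3 \<alpha>1 \<alpha>2 \<alpha>3 n p'"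
  then have "lab1 n p = lab1 n p'" "lab2 n p = lab2 n p'"
    using inj_onD[OF inj_val1[OF assms(1-4)]] inj_onD[OF inj_val2[OF assms(5-8)]]
      labels_in_Lab[OF p \<open>n \<ge> 1\<close>] labels_in_Lab[OF p' \<open>n \<ge> 1\<close>]
    unfolding pt_def by auto
  then show "p = p'" using inj_onD[OF inj_on_first_labels _ p p'] by simp
qed

lemma apt_block:
  assumes "1 \<le> k" "t < 5"
  shows "apt x1 y1 x2 y2 x3 z3 \<alpha>1 \<alpha>2 \<alpha>3 (5 * k - 1 + t) = pt x1 y1 x2 y2 x3 z3 \<alpha>1 \<alpha>2 \<alpha>3 n (k, t)"
proof -
  obtain j where k: "k = Suc j" using assms by (cases k) auto
  have "t = 0 \<or> t = 1 \<or> t = 2 \<or> t = 3 \<or> t = 4" using assms by auto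
  then show ?thesis using k
    by (elim disjE)
      (simp_all add: apt_def Let_def A2_def A3_def pt_def val1_def val2_def val3_def lab_defs
        algebra_simps)
qed

lemma apt_ends:
  assumes "n \<ge> 1"
  shows "apt x1 y1 x2 y2 x3 z3 \<alpha>1 \<alpha>2 \<alpha>3 1 = pt x1 y1 x2 y2 x3 z3 \<alpha>1 \<alpha>2 \<alpha>3 n (0, 1)"
    and "apt x1 y1 x2 y2 x3 z3 \<alpha>1 \<alpha>2 \<alpha>3 (5 * n + 3) = pt x1 y1 x2 y2 x3 z3 \<alpha>1 \<alpha>2 \<alpha>3 n (n, 4)"
proof -
  show "apt x1 y1 x2 y2 x3 z3 \<alpha>1 \<alpha>2 \<alpha>3 1 = pt x1 y1 x2 y2 x3 z3 \<alpha>1 \<alpha>2 \<alpha>3 n (0, 1)"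
    by (simp add: apt_def pt_def val1_def val2_def val3_def lab_defs)
  have last: "5 * n + 3 = 5 * n - 1 + 4" using assms by simp
  show "apt x1 y1 x2 y2 x3 z3 \<alpha>1 \<alpha>2 \<alpha>3 (5 * n + 3) = pt x1 y1 x2 y2 x3 z3 \<alpha>1 \<alpha>2 \<alpha>3 n (n, 4)"
    unfolding last by (rule apt_block[OF assms]) simp
qed

lemma Fset_eq_image:
  assumes "n \<ge> 1"
  shows "Fset x1 y1 x2 y2 x3 z3 \<alpha>1 \<alpha>2 \<alpha>3 n = pt x1 y1 x2 y2 x3 z3 \<alpha>1 \<alpha>2 \<alpha>3 n ` Idx n"
proof -
  let ?a = "apt x1 y1 x2 y2 x3 z3 \<alpha>1 \<alpha>2 \<alpha>3" and ?p = "pt x1 y1 x2 y2 x3 z3 \<alpha>1 \<alpha>2 \<alpha>3 n"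
  define B :: "(nat \<times> nat) set" where "B = {(k, t). 1 \<le> k \<and> k \<le> n \<and> t < 5}"
  define m :: "nat \<times> nat \<Rightarrow> nat" where "m = (\<lambda>(k, t). 5 * k - 1 + t)"
  have block0: "bpt y2 z3 \<alpha>1 n = ?p (0, 0)" "?a 1 = ?p (0, 1)" "?a 2 = ?p (0, 2)" "?a 3 = ?p (0, 3)"
    using assms by (simp_all add: bpt_def apt_def pt_def val1_def val2_def val3_def lab_defs)
  have positions: "{1..5 * n + 3} = {1, 2, 3} \<union> m ` B"
  proof (intro equalityI subsetI)
    fix i assume i: "i \<in> {1..5 * n + 3}"
    show "i \<in> {1, 2, 3} \<union> m ` B"
    proof (cases "i \<le> 3")
      case False
      then have "i = 5 * ((i + 1) div 5) - 1 + (i + 1) mod 5" "1 \<le> (i + 1) div 5"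
        "(i + 1) div 5 \<le> n" "(i + 1) mod 5 < 5" using i by auto
      then show ?thesis
        by (intro UnI2 image_eqI[of _ _ "((i + 1) div 5, (i + 1) mod 5)"]) (auto simp: m_def B_def)
    qed (use i in auto)
  qed (auto simp: m_def B_def)
  have blocks: "?a ` m ` B = ?p ` B"
    unfolding image_image
  proof (rule image_cong)
    fix p assume "p \<in> B"
    then obtain k t where "p = (k, t)" "1 \<le> k" "t < 5" by (auto simp: B_def)
    then show "?a (m p) = ?p p" using apt_block[of k t] by (simp add: m_def)
  qed simp
  have "Dset x1 y1 x2 y2 x3 z3 \<alpha>1 \<alpha>2 \<alpha>3 n = {?a 1, ?a 2, ?a 3} \<union> ?p ` B"
    unfolding Dset_def positions image_Un blocks by simp
  moreover have "Idx n = {(0, 0), (0, 1), (0, 2), (0, 3)} \<union> B"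
    unfolding Idx_def B_def by auto
  ultimately show ?thesis unfolding Fset_def block0 by auto
qed

definition Inner :: "nat \<Rightarrow> (nat \<times> nat) set" where
  "Inner n = Idx n - {(0, 1), (n, 4)}"

lemma Inner_cases:
  assumes "(k, t) \<in> Inner n"
  shows "k = 0 \<and> (t = 0 \<or> t = 2 \<or> t = 3)
    \<or> k = n \<and> 1 \<le> n \<and> (t = 0 \<or> t = 1 \<or> t = 2 \<or> t = 3)
    \<or> 1 \<le> k \<and> k < n \<and> (t = 0 \<or> t = 1 \<or> t = 2 \<or> t = 3 \<or> t = 4)"
  using assms unfolding Inner_def Idx_def by auto

lemma Inner_bounds:
  assumes "(K, tq) \<in> Inner n"
  shows "K \<le> n" "tq < 5" "K = 0 \<longrightarrow> tq = 0 \<or> tq = 2 \<or> tq = 3" "K = n \<longrightarrow> tq \<noteq> 4"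
  using assms unfolding Inner_def Idx_def by auto

(* The five labels of the two ends: a_1 = (x1, x2, x3) and
   a_(5n+3) = (x1, alpha_(5n-8), alpha_(5n-2)). *)
definition end_labels :: "nat \<Rightarrow> (nat \<times> nat) set" where
  "end_labels n = {(0, 5), (0, 6), (0, 7), (n - 1, 2), (n, 4)}"

lemma end_labels_are_labels:
  assumes "n \<ge> 1"
  shows "end_labels n = {lab1 n (0, 1), lab2 n (0, 1), lab3 n (0, 1), lab2 n (n, 4), lab3 n (n, 4)}"
  using assms by (auto simp: end_labels_def lab_defs)

(* Once an inner index q = (K, tq) is removed, every other inner
   index (k, t) is assigned one of its own labels, chosen_label n K tq k t, such that no
   label is chosen twice and no label of the two ends is chosen.  The choice depends on
   whether (k, t) lies in block 0, in the last block n, in a block before that of q, in the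
   block of q, or in a block after it.
   Injectivity is certified by the left inverse label_owner, which recovers the index from
   the chosen label. *)
definition chosen_label :: "nat \<Rightarrow> nat \<Rightarrow> nat \<Rightarrow> nat \<Rightarrow> nat \<Rightarrow> nat \<times> nat" where
  "chosen_label n K tq k t =
   (if k = 0 then
      (if t = 2 then (0,0) else if t = 3 then (if K = 0 \<and> tq = 2 then (0,0) else (0,4))
       else (if K = 0 then (0,4) else if K = n then (n,1) else (0,2)))
    else if k = n then
     (if K = n then
        (if t = 0 then (if tq = 3 then (k,2) else (k,0))
         else if t = 1 then (k,3)
         else if t = 2 then (if tq = 0 \<or> tq = 3 then (k,0) else (k,3))
         else (k,2))
      else (if t = 0 then (k,0) else if t = 1 then (k,1) else if t = 2 then (k,3) else (k,2)))
    else if 1 \<le> K \<and> K < n \<and> k < K then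
     (if t = 0 then (k,0) else if t = 1 then (k,1) else if t = 2 then (k,3)
      else if t = 3 then (k,2) else (k,4))
    else if k = K then
     (if t = 4 then (k,4) else if t = 3 then (k,1)
      else if t = 1 then (if tq = 3 then (k,1) else (k,3))
      else if t = 2 then (if tq = 0 \<or> tq = 4 then (k,0) else (k,3))
      else (if tq = 4 then (k,4) else (k,0)))
    else
     (if t = 4 then (k-1,2) else if t = 0 then (k,4) else if t = 1 then (k,3)
      else if t = 2 then (k,0) else (k,1)))"

definition label_owner :: "nat \<Rightarrow> nat \<Rightarrow> nat \<Rightarrow> nat \<times> nat \<Rightarrow> nat \<times> nat" where
  "label_owner n K tq v = (let a = fst v; s = snd v in
    if a = 0 then
      (if s = 0 then (if K = 0 \<and> tq = 2 then (0,3) else (0,2))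
       else if s = 4 then (if K = 0 \<and> tq \<noteq> 0 then (0,0) else (0,3))
       else (if 1 \<le> K \<and> K < n then (0,0) else (1,4)))
    else if s = 1 then
      (if a = n then (if K = n then (0,0) else (a,1))
       else if 1 \<le> K \<and> K < n \<and> a < K then (a,1)
       else if a = K then (if tq = 3 then (a,1) else (a,3))
       else (a,3))
    else if s = 0 then
      (if a = n then (if K = n \<and> (tq = 0 \<or> tq = 3) then (a,2) else (a,0))
       else if 1 \<le> K \<and> K < n \<and> a < K then (a,0)
       else if a = K then (if tq = 0 \<or> tq = 4 then (a,2) else (a,0))
       else (a,2))
    else if s = 3 then
      (if a = n then (if K = n then (if tq = 1 then (a,2) else (a,1)) else (a,2))
       else if 1 \<le> K \<and> K < n \<and> a < K then (a,2)
       else if a = K then (if tq = 1 \<or> tq = 3 then (a,2) else (a,1))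
       else (a,1))
    else if s = 2 then
      (if a = n then (if K = n \<and> tq = 3 then (a,0) else (a,3))
       else if 1 \<le> K \<and> K < n \<and> a < K then (a,3)
       else (a+1,4))
    else
      (if 1 \<le> K \<and> K < n \<and> a < K then (a,4)
       else if a = K then (if tq = 4 then (a,0) else (a,4))
       else (a,0)))"

lemma label_owner_chosen_label:
  assumes "n \<ge> 1" "(K, tq) \<in> Inner n" "(k, t) \<in> Inner n" "(k, t) \<noteq> (K, tq)"
  shows "label_owner n K tq (chosen_label n K tq k t) = (k, t)"
  using Inner_cases[OF assms(3)] assms(1,4) Inner_bounds[OF assms(2)]
  by (elim disjE conjE; simp only:;
      simp add: chosen_label_def label_owner_def Let_def split: if_split; (auto)?)

lemma chosen_label_is_label:
  assumes "n \<ge> 1" "(K, tq) \<in> Inner n" "(k, t) \<in> Inner n" "(k, t) \<noteq> (K, tq)"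
  shows "chosen_label n K tq k t \<in> {lab1 n (k, t), lab2 n (k, t), lab3 n (k, t)}"
  using Inner_cases[OF assms(3)] assms(1,4) Inner_bounds[OF assms(2)]
  by (elim disjE conjE; simp only:;
      simp add: chosen_label_def lab_defs Let_def split: if_split; (auto)?)

lemma chosen_label_not_end_label:
  assumes "n \<ge> 1" "(K, tq) \<in> Inner n" "(k, t) \<in> Inner n" "(k, t) \<noteq> (K, tq)"
  shows "chosen_label n K tq k t \<notin> end_labels n"
  using Inner_cases[OF assms(3)] assms(1,4) Inner_bounds[OF assms(2)] unfolding end_labels_def
  by (elim disjE conjE; simp only:;
      simp add: chosen_label_def Let_def split: if_split; (auto)?)

lemma card_UN_ge_transversal:
  assumes fin: "finite J" "\<And>p. p \<in> J \<Longrightarrow> finite (L p)"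
    and D: "D \<subseteq> J" and inj: "inj_on h D" and choice: "\<And>p. p \<in> D \<Longrightarrow> h p \<in> L p - P"
    and P: "P \<subseteq> (\<Union>p\<in>J. L p)"
  shows "card D + card P \<le> card (\<Union>p\<in>J. L p)"
proof -
  have fin_UN: "finite (\<Union>p\<in>J. L p)" using fin by blast
  have "h ` D \<inter> P = {}" using choice by blast
  then have "card (h ` D \<union> P) = card D + card P"
    using card_Un_disjoint[of "h ` D" P] card_image[OF inj] finite_subset[OF D fin(1)]
      finite_subset[OF P fin_UN] by simp
  moreover have "h ` D \<union> P \<subseteq> (\<Union>p\<in>J. L p)" using choice D P by blast
  ultimately show ?thesis using card_mono[OF fin_UN] by metis
qed

lemma labels_excess:
  assumes n: "n \<ge> 1" and J: "J \<subseteq> Idx n" "(0, 1) \<in> J" "(n, 4) \<in> J"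
    and q: "q \<in> Inner n" "q \<notin> J"
  shows "card J + 3 \<le> card (lab1 n ` J) + card (lab2 n ` J) + card (lab3 n ` J)"
proof -
  obtain K tq where q_eq: "q = (K, tq)" by (cases q)
  define L where "L p = {lab1 n p, lab2 n p, lab3 n p}" for p
  define D where "D = J - {(0, 1), (n, 4)}"
  define h where "h p = chosen_label n K tq (fst p) (snd p)" for p
  have fin_J: "finite J" using J(1) finite_Idx finite_subset by blast
  have D_inner: "p \<in> Inner n" "p \<noteq> (K, tq)" if "p \<in> D" for p
    using that J q q_eq unfolding D_def Inner_def by auto
  have "inj_on h D"
    by (rule inj_onI) (metis D_inner label_owner_chosen_label[OF n] q(1) q_eq h_def prod.collapse)
  moreover have "h p \<in> L p - end_labels n" if "p \<in> D" for p
    using chosen_label_is_label[OF n] chosen_label_not_end_label[OF n] D_inner[OF that] q q_eq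
    unfolding h_def L_def by (metis prod.collapse Diff_iff)
  moreover have "end_labels n \<subseteq> (\<Union>p\<in>J. L p)"
    using J unfolding end_labels_are_labels[OF n] L_def by blast
  ultimately have "card D + card (end_labels n) \<le> card (\<Union>p\<in>J. L p)"
    using card_UN_ge_transversal[of J L D h "end_labels n"] fin_J unfolding L_def D_def by blast
  moreover have "card (end_labels n) = 5" using n by (simp add: end_labels_def)
  moreover have "card D + 2 = card J"
  proof -
    have ends: "{(0, 1), (n, 4)} \<subseteq> J" and two: "card {(0::nat, 1::nat), (n, 4)} = 2"
      using J n by auto
    have "card D = card J - 2"
      unfolding D_def using card_Diff_subset[OF _ ends] two by simp
    moreover have "2 \<le> card J" using card_mono[OF fin_J ends] two by simp
    ultimately show ?thesis by simp
  qed
  \<comment> \<open>labels of different coordinates are different\<close>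
  moreover have "card (\<Union>p\<in>J. L p) = card (lab1 n ` J) + card (lab2 n ` J) + card (lab3 n ` J)"
  proof -
    have "lab1 n ` J \<subseteq> Lab1" "lab2 n ` J \<subseteq> Lab2" "lab3 n ` J \<subseteq> Lab3"
      using labels_in_Lab[OF _ n] J(1) by blast+
    then have "lab1 n ` J \<inter> lab2 n ` J = {}" "(lab1 n ` J \<union> lab2 n ` J) \<inter> lab3 n ` J = {}"
      using Lab_disjoint by blast+
    moreover have "(\<Union>p\<in>J. L p) = lab1 n ` J \<union> lab2 n ` J \<union> lab3 n ` J"
      unfolding L_def by blast
    ultimately show ?thesis using fin_J by (simp add: card_Un_disjoint)
  qed
  ultimately show ?thesis by simp
qed

(* Proper subsets of F_n through both ends are not full: by the counting lemma they have at
   least |S| + 3 distinct coordinate values, contradicting the rank bound for full sets. *)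
lemma proper_subset_not_full:
  assumes d1: "x1 \<noteq> y1" "inj_on \<alpha>1 I1" "x1 \<notin> \<alpha>1 ` I1" "y1 \<notin> \<alpha>1 ` I1"
    and d2: "x2 \<noteq> y2" "inj_on \<alpha>2 I2" "x2 \<notin> \<alpha>2 ` I2" "y2 \<notin> \<alpha>2 ` I2"
    and d3: "x3 \<noteq> z3" "inj_on \<alpha>3 I3" "x3 \<notin> \<alpha>3 ` I3" "z3 \<notin> \<alpha>3 ` I3"
    and n: "n \<ge> 1"
    and J: "J \<subseteq> Idx n" "(0, 1) \<in> J" "(n, 4) \<in> J" "J \<noteq> Idx n"
  shows "\<not> full (pt x1 y1 x2 y2 x3 z3 \<alpha>1 \<alpha>2 \<alpha>3 n ` J)"
proof
  let ?p = "pt x1 y1 x2 y2 x3 z3 \<alpha>1 \<alpha>2 \<alpha>3 n"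
  assume full: "full (?p ` J)"
  have fin_J: "finite J" using J(1) finite_Idx finite_subset by blast
  obtain q where q: "q \<in> Inner n" "q \<notin> J" using J unfolding Inner_def by blast
  have lab_J: "lab1 n ` J \<subseteq> Lab1" "lab2 n ` J \<subseteq> Lab2" "lab3 n ` J \<subseteq> Lab3"
    using labels_in_Lab[OF _ n] J(1) by blast+
  \<comment> \<open>the values of distinct labels are distinct\<close>
  have "card (proj1 (?p ` J)) = card (lab1 n ` J)"
    using card_image[OF inj_on_subset[OF inj_val1[OF d1] lab_J(1)]]
    unfolding proj1_def pt_def image_image by simp
  moreover have "card (proj2 (?p ` J)) = card (lab2 n ` J)"
    using card_image[OF inj_on_subset[OF inj_val2[OF d2] lab_J(2)]]
    unfolding proj2_def pt_def image_image by simp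
  moreover have "card (proj3 (?p ` J)) = card (lab3 n ` J)"
    using card_image[OF inj_on_subset[OF inj_val3[OF d3] lab_J(3)]]
    unfolding proj3_def pt_def image_image by simp
  moreover have "card (?p ` J) = card J"
    using card_image[OF inj_on_subset[OF inj_pt[OF d1 d2 n] J(1)]] .
  ultimately show False
    using full_projection_bound[OF full finite_imageI[OF fin_J]] labels_excess[OF n J(1-3) q]
    by simp
qed

theorem mainTheorem7:
  fixes x1 y1 :: 'a and x2 y2 :: 'b and x3 z3 :: 'c
    and \<alpha>1 :: "int \<Rightarrow> 'a" and \<alpha>2 :: "int \<Rightarrow> 'b" and \<alpha>3 :: "int \<Rightarrow> 'c"
    and n :: nat
  assumes d1: "x1 \<noteq> y1" "inj_on \<alpha>1 I1" "x1 \<notin> \<alpha>1 ` I1" "y1 \<notin> \<alpha>1 ` I1"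
    and d2: "x2 \<noteq> y2" "inj_on \<alpha>2 I2" "x2 \<notin> \<alpha>2 ` I2" "y2 \<notin> \<alpha>2 ` I2"
    and d3: "x3 \<noteq> z3" "inj_on \<alpha>3 I3" "x3 \<notin> \<alpha>3 ` I3" "z3 \<notin> \<alpha>3 ` I3"
    and n: "n \<ge> 1"
  shows "(\<forall>S. S \<subset> Fset x1 y1 x2 y2 x3 z3 \<alpha>1 \<alpha>2 \<alpha>3 n
               \<and> apt x1 y1 x2 y2 x3 z3 \<alpha>1 \<alpha>2 \<alpha>3 1 \<in> S
               \<and> apt x1 y1 x2 y2 x3 z3 \<alpha>1 \<alpha>2 \<alpha>3 (5*n + 3) \<in> S
             \<longrightarrow> \<not> full S)
         \<and> card (Fset x1 y1 x2 y2 x3 z3 \<alpha>1 \<alpha>2 \<alpha>3 n) = 5*n + 4"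
proof -
  let ?p = "pt x1 y1 x2 y2 x3 z3 \<alpha>1 \<alpha>2 \<alpha>3 n"
  have F: "Fset x1 y1 x2 y2 x3 z3 \<alpha>1 \<alpha>2 \<alpha>3 n = ?p ` Idx n" by (rule Fset_eq_image[OF n])
  have "\<not> full S" if S: "S \<subset> ?p ` Idx n" "?p (0, 1) \<in> S" "?p (n, 4) \<in> S" for S
  proof -
    define J where "J = {p \<in> Idx n. ?p p \<in> S}"
    have "S = ?p ` J" using S(1) unfolding J_def by blast
    moreover have "J \<subseteq> Idx n" "J \<noteq> Idx n" using S(1) \<open>S = ?p ` J\<close> unfolding J_def by auto
    moreover have "(0, 1) \<in> J" "(n, 4) \<in> J" using S(2,3) n unfolding J_def Idx_def by auto
    ultimately show ?thesis using proper_subset_not_full[OF d1 d2 d3 n] by blast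
  qed
  moreover have "card (?p ` Idx n) = 5 * n + 4"
    using card_image[OF inj_pt[OF d1 d2 n]] card_Idx by simp
  ultimately show ?thesis unfolding F apt_ends[OF n] by blast
qed

end
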